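(* Let $T$ be a tree and $\mathfrak p=(R\overset{q}{\twoheadleftarrow}S\overset{i}{\hookrightarrow}T)\in\mathfrak P_T$. The subspace $\mathsf L_T(\mathfrak p)\subset\mathsf L_T$ of points leading to $\mathfrak p$ is an open cell of dimension $\rho(\mathfrak p)=|V(T)|-|V(R)|$. Its closure is a convex polyhedron in a Euclidean space, cut out by explicit equalities and inequalities on coordinate functions.
   Context: A tree is a nonempty finite connected acyclic graph with vertex set $V(T)$ and edge set $E(T)$ (two-element subsets of $V(T)$). Subgraphs are full (vertex-induced); a subtree is a subgraph which is a tree. A quotient tree $S\twoheadrightarrow R$ is a tree $R$ with a surjection $V(S)\to V(R)$ whose fibers are vertex sets of subtrees of $S$, vertices of $R$ adjacent iff an edge of $S$ joins their fibers. Arboreal singularity: for $\alpha\in V(T)$ let $\mathsf L_T(\alpha)=\mathbb R^{V(T)\setminus\{\alpha\}}$ with coordinates $x_\gamma(\alpha)$; $\mathsf L_T$ is the quotient of $\coprod_\alpha\mathsf L_T(\alpha)$ by the equivalence relation generated by identifying, for each edge $\{\alpha,\beta\}$, $\{x_\gamma(\alpha)\}\sim\{x_\gamma(\beta)\}$ whenever $x_\beta(\alpha)=x_\alpha(\beta)\ge0$ and $x_\gamma(\alpha)=x_\gamma(\beta)$ for $\gamma\ne\alpha,\beta$. Each $\mathsf L_T(\alpha)$ is regarded as a subspace of $\mathsf L_T$. For $x\in\mathsf L_T$: $S_x$ is the full subgraph of $T$ on $\{\alpha:x\in\mathsf L_T(\alpha)\}$ (a subtree), and $R_x$ is the quotient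 of $S_x$ contracting exactly the edges $\{\alpha,\beta\}\in E(S_x)$ with $x_\beta(\alpha)=x_\alpha(\beta)>0$ at $x$. $\mathfrak P_T$ is the set of correspondences $(R\overset{q}{\twoheadleftarrow}S\overset{i}{\hookrightarrow}T)$ with $i$ inclusion of a subtree and $q$ a quotient of trees (equivalently a subtree $S$ with a partition into subtrees, the fibers of $q$). $\mathsf L_T(\mathfrak p)=\{x\in\mathsf L_T:(R_x\twoheadleftarrow S_x\hookrightarrow T)=\mathfrak p\}$. *)

theory Defs
  imports "HOL-Analysis.Analysis"
begin

definition is_walk :: "'v set set \<Rightarrow> 'v list \<Rightarrow> bool" where
  "is_walk E xs \<longleftrightarrow> (\<forall>i. Suc i < length xs \<longrightarrow> {xs ! i, xs ! Suc i} \<in> E)"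

definition graph_connected :: "'v set \<Rightarrow> 'v set set \<Rightarrow> bool" where
  "graph_connected W E \<longleftrightarrow>
     (\<forall>u\<in>W. \<forall>v\<in>W. \<exists>xs. xs \<noteq> [] \<and> hd xs = u \<and> last xs = v \<and> set xs \<subseteq> W \<and> is_walk E xs)"

definition has_cycle :: "'v set \<Rightarrow> 'v set set \<Rightarrow> bool" where
  "has_cycle W E \<longleftrightarrow>
     (\<exists>xs. length xs \<ge> 3 \<and> distinct xs \<and> set xs \<subseteq> W \<and> is_walk E xs \<and> {last xs, hd xs} \<in> E)"

definition is_tree :: "'v set \<Rightarrow> 'v set set \<Rightarrow> bool" where
  "is_tree W E \<longleftrightarrow> finite W \<and> W \<noteq> {} \<and>
     (\<forall>e\<in>E. \<exists>u v. u \<noteq> v \<and> u \<in> W \<and> v \<in> W \<and> e = {u, v}) \<and>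
     graph_connected W E \<and> \<not> has_cycle W E"

definition induced :: "'v set set \<Rightarrow> 'v set \<Rightarrow> 'v set set" where
  "induced E A = {e \<in> E. e \<subseteq> A}"

definition is_subtree :: "'v set \<Rightarrow> 'v set set \<Rightarrow> 'v set \<Rightarrow> bool" where
  "is_subtree V E A \<longleftrightarrow> A \<subseteq> V \<and> is_tree A (induced E A)"

text \<open>The set of correspondences \<open>R \<leftarrow> S \<hookrightarrow> T\<close> for the tree T = (UNIV, E),
  represented (as in the paper) by a subtree S together with the partition P of
  S into subtrees given by the fibres of the quotient map q; then V(R) = P.\<close>
definition corresp :: "'v set set \<Rightarrow> ('v set \<times> 'v set set) set" where
  "corresp E = {(S, P). is_subtree UNIV E S \<and> \<Union>P = S \<and>
       (\<forall>C\<in>P. is_subtree UNIV E C) \<and>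
       (\<forall>C\<in>P. \<forall>D\<in>P. C \<noteq> D \<longrightarrow> C \<inter> D = {})}"

text \<open>A point of the chart \<open>L_T(\<alpha>) = \<real>^(V(T) - {\<alpha>})\<close> is encoded as a pair
  (\<alpha>, y) with y :: real^'v and y$\<alpha> = 0; the coordinate \<open>x_\<gamma>(\<alpha>)\<close> is y$\<gamma>.\<close>

definition raw_pts :: "('v::finite \<times> (real^'v)) set" where
  "raw_pts = {(\<alpha>, y). y $ \<alpha> = 0}"

definition glue_step :: "'v::finite set set \<Rightarrow> (('v \<times> (real^'v)) \<times> ('v \<times> (real^'v))) set" where
  "glue_step E = {((\<alpha>, y), (\<beta>, z)). {\<alpha>, \<beta>} \<in> E \<and> \<alpha> \<noteq> \<beta> \<and> y $ \<alpha> = 0 \<and> z $ \<beta> = 0 \<and>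
       y $ \<beta> = z $ \<alpha> \<and> y $ \<beta> \<ge> 0 \<and> (\<forall>\<gamma>. \<gamma> \<noteq> \<alpha> \<and> \<gamma> \<noteq> \<beta> \<longrightarrow> y $ \<gamma> = z $ \<gamma>)}"

definition glue_rel :: "'v::finite set set \<Rightarrow> (('v \<times> (real^'v)) \<times> ('v \<times> (real^'v))) set" where
  "glue_rel E = (glue_step E \<union> (glue_step E)\<inverse>)\<^sup>*"

definition LT :: "'v::finite set set \<Rightarrow> ('v \<times> (real^'v)) set set" where
  "LT E = raw_pts // glue_rel E"

definition chart :: "'v::finite set set \<Rightarrow> 'v \<Rightarrow> (real^'v) \<Rightarrow> ('v \<times> (real^'v)) set" where
  "chart E \<alpha> y = glue_rel E `` {(\<alpha>, y)}"

definition LT_top :: "'v::finite set set \<Rightarrow> ('v \<times> (real^'v)) set topology" where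
  "LT_top E = topology (\<lambda>U. U \<subseteq> LT E \<and>
     (\<forall>\<alpha>. openin (top_of_set {y. y $ \<alpha> = 0}) {y. y $ \<alpha> = 0 \<and> chart E \<alpha> y \<in> U}))"

definition in_chart :: "'v::finite \<Rightarrow> ('v \<times> (real^'v)) set \<Rightarrow> bool" where
  "in_chart \<alpha> x \<longleftrightarrow> (\<exists>y. (\<alpha>, y) \<in> x)"

definition coord :: "('v::finite \<times> (real^'v)) set \<Rightarrow> 'v \<Rightarrow> 'v \<Rightarrow> real" where
  "coord x \<alpha> \<gamma> = (THE y. (\<alpha>, y) \<in> x) $ \<gamma>"

definition S_of :: "('v::finite \<times> (real^'v)) set \<Rightarrow> 'v set" where
  "S_of x = {\<alpha>. in_chart \<alpha> x}"

definition contracted :: "'v::finite set set \<Rightarrow> ('v \<times> (real^'v)) set \<Rightarrow> ('v \<times> 'v) set" where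
  "contracted E x = {(\<alpha>, \<beta>). {\<alpha>, \<beta>} \<in> induced E (S_of x) \<and>
       coord x \<alpha> \<beta> = coord x \<beta> \<alpha> \<and> coord x \<alpha> \<beta> > 0}"

definition P_of :: "'v::finite set set \<Rightarrow> ('v \<times> (real^'v)) set \<Rightarrow> 'v set set" where
  "P_of E x = S_of x // ((contracted E x \<union> (contracted E x)\<inverse>)\<^sup>* \<inter> (S_of x \<times> S_of x))"

definition LT_cell :: "'v::finite set set \<Rightarrow> 'v set \<Rightarrow> 'v set set \<Rightarrow> ('v \<times> (real^'v)) set set" where
  "LT_cell E S P = {x \<in> LT E. S_of x = S \<and> P_of E x = P}"

end

theory Submission
  imports Defs "HOL-Homology.Invariance_of_Domain"
begin

text \<open>Fix a vertex r of S and read everything in the chart \<open>L_T(r)\<close>.  Rooting T at r, a point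
  y of this chart lies in the cell of (S, P) exactly when each vertex c \<noteq> r of S has
  coordinate 0 if it is the top of a block of P, positive coordinate if it lies in the block of
  its parent, and each child of S outside S has negative coordinate; the remaining coordinates
  are free.  The tops of blocks are in bijection with the blocks other than that of r, so the
  cell is a product of |V(T)| - |P| open half-lines and lines.  Its closure is the polyhedron
  obtained by relaxing the strict inequalities, and the chart is a closed embedding, so it
  carries this polyhedron homeomorphically onto the closure of the cell.\<close>

abbreviation chart_dom :: "'v::finite \<Rightarrow> (real^'v) set" where
  "chart_dom a \<equiv> {y. y $ a = 0}"

fun edge_walk :: "'v set set \<Rightarrow> 'v list \<Rightarrow> bool" where
  "edge_walk E (x # y # r) \<longleftrightarrow> {x, y} \<in> E \<and> edge_walk E (y # r)"
| "edge_walk E _ \<longleftrightarrow> True"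

lemma is_walk_Cons_Cons: "is_walk E (x # y # r) \<longleftrightarrow> {x, y} \<in> E \<and> is_walk E (y # r)"
  unfolding is_walk_def
proof safe
  fix i assume "\<forall>i. Suc i < length (x # y # r) \<longrightarrow> {(x # y # r) ! i, (x # y # r) ! Suc i} \<in> E"
  then show "{x,y} \<in> E" and "Suc i < length (y # r) \<Longrightarrow> {(y # r) ! i, (y # r) ! Suc i} \<in> E"
    by (auto dest: spec[of _ 0] spec[of _ "Suc i"])
next
  fix i assume "{x,y} \<in> E" "\<forall>i. Suc i < length (y # r) \<longrightarrow> {(y # r) ! i, (y # r) ! Suc i} \<in> E"
    "Suc i < length (x # y # r)"
  then show "{(x # y # r) ! i, (x # y # r) ! Suc i} \<in> E"
    by (cases i) auto
qed

lemma is_walk_iff_edge_walk: "is_walk E xs \<longleftrightarrow> edge_walk E xs"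
proof (induction E xs rule: edge_walk.induct)
  case (1 E x y r) then show ?case by (simp add: is_walk_Cons_Cons)
qed (simp_all add: is_walk_def)

lemma edge_walk_Cons: "edge_walk E (x # xs) \<longleftrightarrow> edge_walk E xs \<and> (xs \<noteq> [] \<longrightarrow> {x, hd xs} \<in> E)"
  by (cases xs) auto

lemma edge_walk_append [simp]:
  "edge_walk E (xs @ ys) \<longleftrightarrow>
     edge_walk E xs \<and> edge_walk E ys \<and> (xs \<noteq> [] \<and> ys \<noteq> [] \<longrightarrow> {last xs, hd ys} \<in> E)"
  by (induction xs) (auto simp: edge_walk_Cons)

lemma edge_walk_rev [simp]: "edge_walk E (rev xs) \<longleftrightarrow> edge_walk E xs"
  by (induction xs) (auto simp: insert_commute edge_walk_Cons last_rev hd_rev)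

lemma edge_walk_mono: "edge_walk E xs \<Longrightarrow> E \<subseteq> E' \<Longrightarrow> edge_walk E' xs"
  by (induction E xs rule: edge_walk.induct) auto

lemma edge_walk_rtrancl:
  assumes "edge_walk E xs" "xs \<noteq> []" "set xs \<subseteq> C"
    and "\<And>a b. {a, b} \<in> E \<Longrightarrow> a \<in> C \<Longrightarrow> b \<in> C \<Longrightarrow> (a, b) \<in> F"
  shows "(hd xs, last xs) \<in> F\<^sup>*"
  using assms(1-3)
proof (induction xs)
  case (Cons x xs)
  show ?case
  proof (cases xs)
    case (Cons y ys)
    then have "(y, last (y # ys)) \<in> F\<^sup>*" using Cons.IH Cons.prems by simp
    moreover have "(x, y) \<in> F" using Cons.prems \<open>xs = y # ys\<close> assms(4) by auto
    ultimately show ?thesis using \<open>xs = y # ys\<close> by (simp add: converse_rtrancl_into_rtrancl)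
  qed simp
qed simp

lemma subtree_walk:
  assumes "is_subtree UNIV E C" "u \<in> C" "w \<in> C"
  obtains xs where "edge_walk E xs" "xs \<noteq> []" "hd xs = u" "last xs = w" "set xs \<subseteq> C"
proof -
  have "graph_connected C (induced E C)"
    using assms(1) by (simp add: is_subtree_def is_tree_def)
  then obtain xs where "xs \<noteq> []" "hd xs = u" "last xs = w" "set xs \<subseteq> C"
    "edge_walk (induced E C) xs"
    using assms unfolding graph_connected_def is_walk_iff_edge_walk by blast
  then show ?thesis
    using that edge_walk_mono[of "induced E C" xs E] by (auto simp: induced_def)
qed

definition graph_path :: "'v set set \<Rightarrow> 'v \<Rightarrow> 'v \<Rightarrow> 'v list \<Rightarrow> bool" where
  "graph_path E a b p \<longleftrightarrow> p \<noteq> [] \<and> hd p = a \<and> last p = b \<and> distinct p \<and> edge_walk E p"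

lemma graph_path_from_walk:
  assumes "edge_walk E xs" "xs \<noteq> []" "hd xs = a" "last xs = b" "set xs \<subseteq> W"
  shows "\<exists>p. graph_path E a b p \<and> set p \<subseteq> W"
  using assms
proof (induction "length xs" arbitrary: xs rule: less_induct)
  case less
  show ?case
  proof (cases "distinct xs")
    case True then show ?thesis using less.prems unfolding graph_path_def by blast
  next
    case False
    then obtain ys x zs ws where xs: "xs = ys @ x # zs @ x # ws"
      using not_distinct_decomp by (metis append_Cons append_Nil)
    define xs' where "xs' = ys @ x # ws"
    have "length xs' < length xs" by (simp add: xs xs'_def)
    moreover have "edge_walk E xs'" using less.prems(1) by (auto simp: xs xs'_def edge_walk_Cons)
    moreover have "xs' \<noteq> []" "hd xs' = a" "last xs' = b" "set xs' \<subseteq> W"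
      using less.prems by (auto simp: xs xs'_def hd_append)
    ultimately show ?thesis using less.hyps by blast
  qed
qed

lemma graph_path_Cons_Cons:
  "graph_path E a b (u # x # p) \<longleftrightarrow>
     u = a \<and> {a, x} \<in> E \<and> a \<notin> set (x # p) \<and> graph_path E x b (x # p)"
  by (auto simp: graph_path_def)

lemma graph_path_self: "graph_path E a a p \<Longrightarrow> p = [a]"
proof -
  assume g: "graph_path E a a p"
  then obtain p' where p: "p = a # p'" unfolding graph_path_def by (cases p) auto
  have "p' = []"
  proof (rule ccontr)
    assume "p' \<noteq> []"
    then have "a \<in> set p'" using g p last_in_set[of p'] by (auto simp: graph_path_def)
    then show False using g p by (simp add: graph_path_def)
  qed
  then show "p = [a]" using p by simp
qed

lemma graph_path_ConsE:
  assumes "graph_path E a b p" "a \<noteq> b"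
  obtains x p' where "p = a # x # p'"
proof (cases p)
  case (Cons u p'')
  then show ?thesis using assms that by (cases p'') (auto simp: graph_path_def)
qed (use assms in \<open>simp add: graph_path_def\<close>)

text \<open>Cut the two paths at their first common vertex c; with the edges at a they form the
  cycle a, x, \<dots>, c, \<dots>, y.\<close>
lemma has_cycle_if_two_paths:
  assumes "{a, x} \<in> E" "{a, y} \<in> E" "x \<noteq> y" "graph_path E x b u" "graph_path E y b v"
    and "a \<notin> set u" "a \<notin> set v"
  shows "has_cycle UNIV E"
proof -
  have "\<exists>z\<in>set u. z \<in> set v" using assms(4,5) unfolding graph_path_def
    by (metis last_in_set)
  then obtain u1 c u2 where u: "u = u1 @ c # u2" and c: "c \<in> set v"
    and u1: "\<forall>z\<in>set u1. z \<notin> set v"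
    using split_list_first_prop[of u "\<lambda>z. z \<in> set v"] by blast
  obtain v1 v2 where v: "v = v1 @ c # v2" using c split_list by metis
  define xs where "xs = a # u1 @ c # rev v1"
  have du: "distinct u" "edge_walk E u" "hd u = x"
    and dv: "distinct v" "edge_walk E v" "hd v = y"
    using assms(4,5) unfolding graph_path_def by auto
  have "u1 \<noteq> [] \<or> v1 \<noteq> []"
    using du(3) dv(3) u v assms(3) by (cases u1; cases v1) auto
  then have len: "length xs \<ge> 3" unfolding xs_def by (cases u1; cases v1) auto
  have dist: "distinct xs" unfolding xs_def using du dv u v u1 assms(6,7) by auto
  have walk_u1: "edge_walk E (u1 @ [c])" using du(2) u by (simp add: edge_walk_Cons)
  have walk_v1: "edge_walk E (c # rev v1)"
    using dv(2) v by (auto simp: edge_walk_Cons hd_rev insert_commute)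
  have "edge_walk E ((u1 @ [c]) @ rev v1)"
    using walk_u1 walk_v1 by (auto simp: edge_walk_Cons hd_rev)
  moreover have "hd (u1 @ [c]) = x" using du(3) u by (cases u1) auto
  ultimately have "edge_walk E xs"
    unfolding xs_def using assms(1) edge_walk_Cons[of E a "(u1 @ [c]) @ rev v1"] by (cases u1) auto
  moreover have "{last xs, hd xs} \<in> E"
    unfolding xs_def using dv(3) v assms(2) by (cases v1) (auto simp: last_rev insert_commute)
  ultimately show ?thesis
    unfolding has_cycle_def using len dist is_walk_iff_edge_walk by blast
qed

section \<open>Trees\<close>

locale tree =
  fixes E :: "'v::finite set set"
  assumes tree: "is_tree UNIV E"
begin

lemma edge_ends_distinct: "{a, b} \<in> E \<Longrightarrow> a \<noteq> b"
  using tree unfolding is_tree_def by (metis doubleton_eq_iff insert_absorb2)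

lemma graph_path_unique: "graph_path E a b p \<Longrightarrow> graph_path E a b q \<Longrightarrow> p = q"
proof (induction p arbitrary: a q)
  case (Cons u p)
  show ?case
  proof (cases "a = b")
    case True
    then have "graph_path E a a (u # p)" "graph_path E a a q" using Cons.prems by simp_all
    then show ?thesis by (metis graph_path_self)
  next
    case False
    obtain x p' where p: "u # p = a # x # p'" using graph_path_ConsE[OF Cons.prems(1) False] .
    obtain y q' where q: "q = a # y # q'" using graph_path_ConsE[OF Cons.prems(2) False] .
    have px: "graph_path E x b (x # p')" "{a, x} \<in> E" "a \<notin> set (x # p')"
      using Cons.prems(1) unfolding p graph_path_Cons_Cons by simp_all
    have qy: "graph_path E y b (y # q')" "{a, y} \<in> E" "a \<notin> set (y # q')"
      using Cons.prems(2) unfolding q graph_path_Cons_Cons by simp_all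
    have "x = y"
    proof (rule ccontr)
      assume "x \<noteq> y"
      then have "has_cycle UNIV E"
        using has_cycle_if_two_paths[OF px(2) qy(2) _ px(1) qy(1) px(3) qy(3)] by blast
      then show False using tree by (simp add: is_tree_def)
    qed
    then show ?thesis using Cons.IH[of x "y # q'"] p q px(1) qy(1) by simp
  qed
qed (simp add: graph_path_def)

lemma graph_path_exists: "\<exists>p. graph_path E a b p"
proof -
  have "graph_connected UNIV E" using tree by (simp add: is_tree_def)
  then obtain xs where "xs \<noteq> []" "hd xs = a" "last xs = b" "edge_walk E xs"
    unfolding graph_connected_def is_walk_iff_edge_walk by blast
  then show ?thesis using graph_path_from_walk[of E xs a b UNIV] by auto
qed

definition tree_path :: "'v \<Rightarrow> 'v \<Rightarrow> 'v list" where
  "tree_path a b = (THE p. graph_path E a b p)"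

lemma graph_path_tree_path: "graph_path E a b (tree_path a b)"
  unfolding tree_path_def using graph_path_exists graph_path_unique by (metis theI)

lemma tree_path_eqI: "graph_path E a b p \<Longrightarrow> tree_path a b = p"
  using graph_path_tree_path graph_path_unique by blast

lemma tree_path_simps:
  "tree_path a b \<noteq> []" "hd (tree_path a b) = a" "last (tree_path a b) = b"
  "distinct (tree_path a b)" "edge_walk E (tree_path a b)"
  using graph_path_tree_path[of a b] by (auto simp: graph_path_def)

lemma tree_path_self [simp]: "tree_path a a = [a]"
  by (rule tree_path_eqI) (simp add: graph_path_def)

lemma tree_path_prefix: "tree_path a b = p1 @ c # p2 \<Longrightarrow> tree_path a c = p1 @ [c]"
proof (rule tree_path_eqI)
  assume "tree_path a b = p1 @ c # p2"
  then show "graph_path E a c (p1 @ [c])"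
    using tree_path_simps[of a b] unfolding graph_path_def
    by (cases p1) (auto simp: edge_walk_Cons hd_append)
qed

lemma tree_path_suffix: "tree_path a b = p1 @ c # p2 \<Longrightarrow> tree_path c b = c # p2"
proof (rule tree_path_eqI)
  assume "tree_path a b = p1 @ c # p2"
  then show "graph_path E c b (c # p2)"
    using tree_path_simps[of a b] unfolding graph_path_def by (cases p2) auto
qed

lemma tree_path_edge:
  assumes "{b, c} \<in> E"
  shows "tree_path a c = tree_path a b @ [c] \<or> tree_path a b = tree_path a c @ [b]"
proof (cases "c \<in> set (tree_path a b)")
  case True
  then obtain p1 p2 where p: "tree_path a b = p1 @ c # p2" by (meson split_list)
  have "tree_path c b = [c, b]"
    by (rule tree_path_eqI)
      (use assms edge_ends_distinct in \<open>auto simp: graph_path_def insert_commute\<close>)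
  then have "p2 = [b]" using tree_path_suffix[OF p] by simp
  then show ?thesis using p tree_path_prefix[OF p] by simp
next
  case False
  have "tree_path a c = tree_path a b @ [c]"
    by (rule tree_path_eqI)
      (use False tree_path_simps[of a b] assms in \<open>auto simp: graph_path_def hd_append\<close>)
  then show ?thesis by simp
qed

lemma subtree_tree_path:
  assumes "is_subtree UNIV E C" "a \<in> C" "b \<in> C"
  shows "set (tree_path a b) \<subseteq> C"
proof -
  obtain xs where "edge_walk E xs" "xs \<noteq> []" "hd xs = a" "last xs = b" "set xs \<subseteq> C"
    using subtree_walk[OF assms] .
  then obtain p where "graph_path E a b p" "set p \<subseteq> C" using graph_path_from_walk by metis
  then show ?thesis using tree_path_eqI by simp
qed

end

locale rooted_tree = tree E for E :: "'v::finite set set" + fixes r :: 'v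
begin

definition parent :: "'v \<Rightarrow> 'v" where
  "parent v = last (butlast (tree_path r v))"

lemma tree_path_parent:
  assumes "v \<noteq> r"
  shows "tree_path r v = tree_path r (parent v) @ [v]"
proof -
  have "butlast (tree_path r v) \<noteq> []"
    using tree_path_simps[of r v] assms by (cases "tree_path r v" rule: rev_cases) auto
  then obtain p where "tree_path r v = p @ parent v # [v]"
    unfolding parent_def using tree_path_simps(1,3)[of r v]
    by (metis append_butlast_last_id append_Cons append_Nil append_assoc)
  then show ?thesis using tree_path_prefix by force
qed

lemma parent_edge: "v \<noteq> r \<Longrightarrow> {parent v, v} \<in> E"
  using tree_path_parent[of v] tree_path_simps(5)[of r v] by (simp add: tree_path_simps)

lemma depth_parent_less: "v \<noteq> r \<Longrightarrow> length (tree_path r (parent v)) < length (tree_path r v)"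
  using tree_path_parent by (metis length_append_singleton lessI)

lemma parent_induct [case_names root parent]:
  assumes "P r" "\<And>v. v \<noteq> r \<Longrightarrow> P (parent v) \<Longrightarrow> P v"
  shows "P v"
proof (induction "length (tree_path r v)" arbitrary: v rule: less_induct)
  case less then show ?case using assms depth_parent_less by (cases "v = r") auto
qed

lemma parent_parent_neq: "c \<noteq> r \<Longrightarrow> parent c \<noteq> r \<Longrightarrow> parent (parent c) \<noteq> c"
  using depth_parent_less[of c] depth_parent_less[of "parent c"] by auto

lemma edge_parent: "{b, c} \<in> E \<Longrightarrow> (c \<noteq> r \<and> parent c = b) \<or> (b \<noteq> r \<and> parent b = c)"
proof -
  have root: "tree_path r c = p @ [c] \<Longrightarrow> p \<noteq> [] \<Longrightarrow> c \<noteq> r" for p c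
    by (metis append_self_conv2 list.inject tree_path_self)
  assume "{b, c} \<in> E"
  from tree_path_edge[OF this, of r] show ?thesis
  proof
    assume p: "tree_path r c = tree_path r b @ [c]"
    then have "c \<noteq> r" using root tree_path_simps(1) by blast
    then show ?thesis
      using p tree_path_parent[of c] tree_path_simps(3)[of r b] tree_path_simps(3)[of r "parent c"]
      by simp
  next
    assume p: "tree_path r b = tree_path r c @ [b]"
    then have "b \<noteq> r" using root tree_path_simps(1) by blast
    then show ?thesis
      using p tree_path_parent[of b] tree_path_simps(3)[of r c] tree_path_simps(3)[of r "parent b"]
      by simp
  qed
qed

lemma subtree_parent:
  "is_subtree UNIV E C \<Longrightarrow> r \<in> C \<Longrightarrow> v \<in> C \<Longrightarrow> v \<noteq> r \<Longrightarrow> parent v \<in> C"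
  using subtree_tree_path[of C r v] tree_path_parent[of v] tree_path_simps(1,3)[of r "parent v"]
    last_in_set by fastforce

definition descendants :: "'v \<Rightarrow> 'v set" where
  "descendants v = {w. v \<in> set (tree_path r w)}"

lemma self_in_descendants: "v \<in> descendants v"
  unfolding descendants_def using tree_path_simps(1,3)[of r v] by (metis last_in_set mem_Collect_eq)

lemma parent_notin_descendants: "v \<noteq> r \<Longrightarrow> parent v \<notin> descendants v"
  unfolding descendants_def using tree_path_parent[of v] tree_path_simps(4)[of r v] by auto

lemma depth_le_if_descendant:
  "c' \<in> descendants c \<Longrightarrow> length (tree_path r c) \<le> length (tree_path r c')"
  unfolding descendants_def by (auto dest!: split_list simp: tree_path_prefix)

lemma descendants_antisym: "c' \<in> descendants c \<Longrightarrow> c \<in> descendants c' \<Longrightarrow> c = c'"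
proof -
  assume a: "c' \<in> descendants c" "c \<in> descendants c'"
  then obtain p1 p2 where p: "tree_path r c' = p1 @ c # p2"
    unfolding descendants_def by (meson mem_Collect_eq split_list)
  have "length (tree_path r c) = length (tree_path r c')"
    using depth_le_if_descendant a by (meson le_antisym)
  then have "p2 = []" using tree_path_prefix[OF p] p by simp
  then show "c = c'" using p tree_path_simps(3)[of r c'] by simp
qed

lemma edge_leaving_descendants:
  assumes "{a, b} \<in> E" "a \<in> descendants v" "b \<notin> descendants v"
  shows "a = v \<and> v \<noteq> r \<and> b = parent v"
  using edge_parent[OF assms(1)] tree_path_parent assms(2,3)
  by (auto simp: descendants_def)

lemma subtree_subset_descendants:
  assumes C: "is_subtree UNIV E C" and c: "c \<in> C" "parent c \<notin> C"
  shows "C \<subseteq> descendants c"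
proof
  fix c' assume "c' \<in> C"
  then obtain xs where xs: "edge_walk E xs" "xs \<noteq> []" "hd xs = c" "last xs = c'" "set xs \<subseteq> C"
    using subtree_walk[OF C c(1)] by metis
  define F where "F = {(a, b). a \<in> descendants c \<longrightarrow> b \<in> descendants c}"
  have "(a, b) \<in> F" if "{a, b} \<in> E" "a \<in> C" "b \<in> C" for a b
    using edge_leaving_descendants[OF that(1)] that(3) c(2) unfolding F_def by blast
  then have "(c, c') \<in> F\<^sup>*" using edge_walk_rtrancl[OF xs(1,2,5), of F] xs(3,4) by blast
  then have "(c, c') \<in> F"
    by (induction rule: rtrancl_induct) (auto simp: F_def)
  then show "c' \<in> descendants c" using self_in_descendants unfolding F_def by blast
qed

text \<open>Removing the edge from c to its parent disconnects the tree.\<close>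
lemma parent_edge_if_rtrancl:
  assumes "\<And>a b. (a, b) \<in> F \<Longrightarrow> {a, b} \<in> E" "c \<noteq> r" "(parent c, c) \<in> F\<^sup>*"
  shows "(parent c, c) \<in> F \<or> (c, parent c) \<in> F"
proof -
  have "b \<notin> descendants c \<or> (parent c, c) \<in> F \<or> (c, parent c) \<in> F"
    if "(parent c, b) \<in> F\<^sup>*" for b
    using that
  proof (induction rule: rtrancl_induct)
    case base then show ?case using parent_notin_descendants assms(2) by blast
  next
    case (step b b')
    then show ?case
      using edge_leaving_descendants[of b' b c] assms(1)[OF step.hyps(2)]
      by (auto simp: insert_commute)
  qed
  then show ?thesis using assms(3) self_in_descendants by blast
qed

end

section \<open>Transport between charts\<close>

definition change_chart :: "'v \<Rightarrow> 'v \<Rightarrow> real^'v \<Rightarrow> real^'v" where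
  "change_chart u v y = (\<chi> w. if w = u then y $ v else if w = v then 0 else y $ w)"

lemma change_chart_nth [simp]:
  "change_chart u v y $ w = (if w = u then y $ v else if w = v then 0 else y $ w)"
  by (simp add: change_chart_def)

lemma change_chart_inverse: "x $ v = 0 \<Longrightarrow> change_chart u v (change_chart v u x) = x"
  by (simp add: vec_eq_iff)

text \<open>Moving a point along a path of charts: each step across an edge {u, v} is allowed
  when the coordinate \<open>x_v(u)\<close> is nonnegative.\<close>
fun transportable :: "'v list \<Rightarrow> real^'v \<Rightarrow> bool" where
  "transportable (u # v # l) y \<longleftrightarrow> 0 \<le> y $ v \<and> transportable (v # l) (change_chart u v y)"
| "transportable _ y \<longleftrightarrow> True"

fun transport :: "'v list \<Rightarrow> real^'v \<Rightarrow> real^'v" where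
  "transport (u # v # l) y = transport (v # l) (change_chart u v y)"
| "transport _ y = y"

lemma transport_last: "p \<noteq> [] \<Longrightarrow> y $ hd p = 0 \<Longrightarrow> transport p y $ last p = 0"
  by (induction p y rule: transport.induct) auto

lemma transport_nth_notin: "w \<notin> set p \<Longrightarrow> transport p y $ w = y $ w"
  by (induction p y rule: transport.induct) auto

lemma transport_snoc:
  "p \<noteq> [] \<Longrightarrow> (transportable (p @ [c]) y \<longleftrightarrow> transportable p y \<and> 0 \<le> transport p y $ c) \<and>
     transport (p @ [c]) y = change_chart (last p) c (transport p y)"
proof (induction p arbitrary: y)
  case (Cons u p)
  then show ?case using Cons.IH by (cases p) auto
qed simp

lemma transportable_iff: "distinct p \<Longrightarrow> transportable p y \<longleftrightarrow> (\<forall>v\<in>set (tl p). 0 \<le> y $ v)"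
  by (induction p y rule: transportable.induct) auto

lemma glue_step_elim:
  assumes "((b, z), (c, w)) \<in> glue_step E \<union> (glue_step E)\<inverse>"
  shows "{b, c} \<in> E \<and> b \<noteq> c \<and> 0 \<le> z $ c \<and> z $ b = 0 \<and> w = change_chart b c z"
  using assms unfolding glue_step_def by (auto simp: vec_eq_iff insert_commute)

lemma glue_step_intro:
  "{u, v} \<in> E \<Longrightarrow> u \<noteq> v \<Longrightarrow> y $ u = 0 \<Longrightarrow> 0 \<le> y $ v \<Longrightarrow>
   ((u, y), (v, change_chart u v y)) \<in> glue_step E"
  unfolding glue_step_def by auto

lemma glue_rel_transport:
  "edge_walk E p \<Longrightarrow> distinct p \<Longrightarrow> p \<noteq> [] \<Longrightarrow> y $ hd p = 0 \<Longrightarrow> transportable p y \<Longrightarrow>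
   ((hd p, y), (last p, transport p y)) \<in> glue_rel E"
proof (induction p y rule: transport.induct)
  case (1 u v l y)
  then have "((v, change_chart u v y), (last (v # l), transport (v # l) (change_chart u v y)))
      \<in> glue_rel E"
    by simp
  moreover have "((u, y), (v, change_chart u v y)) \<in> glue_step E"
    using "1.prems" by (intro glue_step_intro) auto
  ultimately have "((u, y), (last (v # l), transport (v # l) (change_chart u v y))) \<in> glue_rel E"
    unfolding glue_rel_def by (meson UnI1 converse_rtrancl_into_rtrancl)
  then show ?case by simp
qed (simp_all add: glue_rel_def)

lemma equiv_glue_rel: "equiv UNIV (glue_rel E)"
  unfolding glue_rel_def
  by (intro equivI refl_rtrancl sym_rtrancl trans_rtrancl) (auto simp: sym_def)

lemma chart_eq_iff_glue_rel: "chart E b z = chart E a y \<longleftrightarrow> ((b, z), (a, y)) \<in> glue_rel E"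
  unfolding chart_def using equiv_class_eq_iff[OF equiv_glue_rel] by blast

context tree
begin

lemma glue_rel_imp_transport:
  assumes "((a, y), (b, z)) \<in> glue_rel E" "y $ a = 0"
  shows "transportable (tree_path a b) y \<and> z = transport (tree_path a b) y"
  using assms(1) unfolding glue_rel_def
proof (induction "(b, z)" arbitrary: b z rule: rtrancl_induct)
  case (step q b z)
  obtain b0 z0 where q: "q = (b0, z0)" by fastforce
  have IH: "z0 = transport (tree_path a b0) y" "transportable (tree_path a b0) y"
    using step.hyps(3) q by auto
  have st: "{b0, b} \<in> E" "0 \<le> z0 $ b" "z = change_chart b0 b z0"
    using glue_step_elim[of b0 z0 b z E] step.hyps(2) q by auto
  from tree_path_edge[OF st(1), of a] show ?case
  proof
    assume "tree_path a b = tree_path a b0 @ [b]"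
    then show ?thesis using transport_snoc[of "tree_path a b0" b y] tree_path_simps IH st by auto
  next
    assume p: "tree_path a b0 = tree_path a b @ [b0]"
    have "transportable (tree_path a b) y" and z0: "z0 = change_chart b b0 (transport (tree_path a b) y)"
      using transport_snoc[of "tree_path a b" b0 y] tree_path_simps IH p by auto
    moreover have "transport (tree_path a b) y $ b = 0"
      using transport_last[of "tree_path a b" y] tree_path_simps assms(2) by simp
    ultimately show ?thesis using st(3) z0 change_chart_inverse by simp
  qed
qed simp

lemma glue_class_eq:
  assumes "y $ a = 0"
  shows "glue_rel E `` {(a, y)} =
           {(b, transport (tree_path a b) y) | b. transportable (tree_path a b) y}"
  using glue_rel_transport[where p="tree_path a _" and y=y and E=E] tree_path_simps
    glue_rel_imp_transport[OF _ assms] assms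
  by fastforce

lemma mem_chart_iff:
  "y $ a = 0 \<Longrightarrow>
   (b, z) \<in> chart E a y \<longleftrightarrow> transportable (tree_path a b) y \<and> z = transport (tree_path a b) y"
  unfolding chart_def using glue_class_eq by auto

lemma chart_eq_iff:
  "y $ a = 0 \<Longrightarrow> z $ b = 0 \<Longrightarrow>
   chart E b z = chart E a y \<longleftrightarrow> transportable (tree_path b a) z \<and> y = transport (tree_path b a) z"
  using chart_eq_iff_glue_rel[where E=E and b=b and z=z and a=a and y=y] mem_chart_iff[of z b a y]
  unfolding chart_def by simp

lemma chart_inj: "y $ a = 0 \<Longrightarrow> y' $ a = 0 \<Longrightarrow> chart E a y = chart E a y' \<Longrightarrow> y = y'"
  using chart_eq_iff[of y' a y a] by simp

lemma in_chart_chart_iff: "y $ a = 0 \<Longrightarrow> in_chart b (chart E a y) \<longleftrightarrow> transportable (tree_path a b) y"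
  unfolding in_chart_def using mem_chart_iff by auto

lemma coord_chart:
  "y $ a = 0 \<Longrightarrow> transportable (tree_path a b) y \<Longrightarrow>
   coord (chart E a y) b c = transport (tree_path a b) y $ c"
  unfolding coord_def using mem_chart_iff[of y a b] by simp

lemma LT_in_chart_imp_chart:
  assumes "x \<in> LT E" "in_chart b x"
  obtains z where "z $ b = 0" "x = chart E b z"
proof -
  obtain a y where y: "y $ a = 0" "x = chart E a y"
    using assms(1) unfolding LT_def chart_def raw_pts_def by (auto elim!: quotientE)
  obtain z where bz: "(b, z) \<in> chart E a y"
    using assms(2) y(2) unfolding in_chart_def by blast
  then have "z $ b = 0"
    using mem_chart_iff[OF y(1)] transport_last[of "tree_path a b" y] tree_path_simps y(1) by auto
  moreover have "chart E b z = x"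
    using bz y equiv_glue_rel unfolding chart_def by (metis Image_singleton_iff equiv_class_eq_iff iso_tuple_UNIV_I)
  ultimately show ?thesis using that by blast
qed

end

section \<open>The topology of \<open>L_T\<close>\<close>

lemma continuous_on_change_chart: "continuous_on UNIV (change_chart u v)"
  unfolding change_chart_def
proof (rule continuous_on_vec_lambda)
  fix w
  show "continuous_on UNIV (\<lambda>y::real^'a. if w = u then y $ v else if w = v then 0 else y $ w)"
    by (cases "w = u"; cases "w = v") (auto intro: continuous_intros)
qed

lemma continuous_on_transport: "continuous_on UNIV (transport p)"
proof (induction p rule: induct_list012)
  case (3 u v l)
  have "transport (u # v # l) = transport (v # l) \<circ> change_chart u v" by (simp add: fun_eq_iff)
  then show ?case
    using 3(2) continuous_on_change_chart
    by (metis continuous_on_compose continuous_on_subset subset_UNIV)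
qed (simp_all add: continuous_on_id')

lemma closed_transportable: "closed {y. transportable p y}"
proof (induction p rule: induct_list012)
  case (3 u v l)
  have "{y. transportable (u # v # l) y} =
      {y. 0 \<le> y $ v} \<inter> change_chart u v -` {y. transportable (v # l) y}"
    by auto
  moreover have "closed {y::real^'a. 0 \<le> y $ v}"
    by (intro closed_Collect_le continuous_intros)
  ultimately show ?case
    using closed_vimage[OF 3(2) continuous_on_change_chart] by (metis closed_Int)
qed simp_all

lemma closed_chart_dom: "closed (chart_dom a)"
  by (intro closed_Collect_eq continuous_intros)

lemma istopology_LT:
  "istopology (\<lambda>U. U \<subseteq> LT E \<and>
     (\<forall>\<alpha>. openin (top_of_set (chart_dom \<alpha>)) {y. y $ \<alpha> = 0 \<and> chart E \<alpha> y \<in> U}))"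
  unfolding istopology_def
proof safe
  fix S T a
  assume "\<forall>\<alpha>. openin (top_of_set (chart_dom \<alpha>)) {y. y $ \<alpha> = 0 \<and> chart E \<alpha> y \<in> S}"
    "\<forall>\<alpha>. openin (top_of_set (chart_dom \<alpha>)) {y. y $ \<alpha> = 0 \<and> chart E \<alpha> y \<in> T}"
  then have "openin (top_of_set (chart_dom a))
      ({y. y $ a = 0 \<and> chart E a y \<in> S} \<inter> {y. y $ a = 0 \<and> chart E a y \<in> T})"
    by blast
  then show "openin (top_of_set (chart_dom a)) {y. y $ a = 0 \<and> chart E a y \<in> S \<inter> T}"
    by (simp add: Collect_conj_eq Int_ac)
next
  fix K a
  assume "\<forall>S\<in>K. S \<subseteq> LT E \<and>
    (\<forall>\<alpha>. openin (top_of_set (chart_dom \<alpha>)) {y. y $ \<alpha> = 0 \<and> chart E \<alpha> y \<in> S})"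
  then have "openin (top_of_set (chart_dom a)) (\<Union>S\<in>K. {y. y $ a = 0 \<and> chart E a y \<in> S})"
    by blast
  moreover have "{y. y $ a = 0 \<and> chart E a y \<in> \<Union>K} = (\<Union>S\<in>K. {y. y $ a = 0 \<and> chart E a y \<in> S})"
    by auto
  ultimately show "openin (top_of_set (chart_dom a)) {y. y $ a = 0 \<and> chart E a y \<in> \<Union>K}"
    by simp
qed auto

lemma openin_LT_top:
  "openin (LT_top E) U \<longleftrightarrow> U \<subseteq> LT E \<and>
     (\<forall>\<alpha>. openin (top_of_set (chart_dom \<alpha>)) {y. y $ \<alpha> = 0 \<and> chart E \<alpha> y \<in> U})"
  unfolding LT_top_def topology_inverse'[OF istopology_LT] by (rule refl)

lemma chart_in_LT: "y $ a = 0 \<Longrightarrow> chart E a y \<in> LT E"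
  unfolding LT_def chart_def raw_pts_def by (intro quotientI) simp

lemma topspace_LT_top: "topspace (LT_top E) = LT E"
proof -
  have "{y. y $ a = 0 \<and> chart E a y \<in> LT E} = chart_dom a" for a
    using chart_in_LT by auto
  then have "openin (LT_top E) (LT E)"
    unfolding openin_LT_top by simp
  then show ?thesis
    using openin_subset[of "LT_top E"] openin_LT_top by (metis openin_topspace subset_antisym)
qed

context tree
begin

lemma continuous_map_chart: "continuous_map (top_of_set (chart_dom a)) (LT_top E) (chart E a)"
  unfolding continuous_map_def topspace_LT_top using chart_in_LT
  by (auto simp: openin_LT_top Collect_conj_eq[symmetric])

text \<open>The preimage of \<open>chart E a ` K\<close> in the chart of b is the closed set of points that can be
  transported along the tree path to a and land in K.\<close>
lemma closed_map_chart: "closed_map (top_of_set (chart_dom a)) (LT_top E) (chart E a)"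
  unfolding closed_map_def
proof clarify
  fix K :: "(real^'v) set" assume K: "closedin (top_of_set (chart_dom a)) K"
  have Kc: "closed K" "K \<subseteq> chart_dom a"
    using closedin_closed_eq[OF closed_chart_dom[of a], of K] K closedin_subset[OF K] by auto
  have sub: "chart E a ` K \<subseteq> LT E" using Kc chart_in_LT by auto
  have "openin (LT_top E) (LT E - chart E a ` K)"
    unfolding openin_LT_top
  proof safe
    fix b
    define M where "M = chart_dom b \<inter> {z. transportable (tree_path b a) z} \<inter>
      transport (tree_path b a) -` K"
    have "z \<in> M \<longleftrightarrow> chart E b z \<in> chart E a ` K" if "z $ b = 0" for z
      using chart_eq_iff[of _ a z b] that Kc unfolding M_def by (auto simp: image_iff)
    moreover have "M \<subseteq> chart_dom b" unfolding M_def by blast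
    ultimately have M: "{z. z $ b = 0 \<and> chart E b z \<in> LT E - chart E a ` K} = chart_dom b - M"
      using chart_in_LT by blast
    have "closed M" unfolding M_def
      by (intro closed_Int closed_chart_dom closed_transportable
          closed_vimage[OF Kc(1) continuous_on_transport])
    then have "closedin (top_of_set (chart_dom b)) M"
      using closedin_closed_eq[OF closed_chart_dom[of b], of M] M_def by blast
    then show "openin (top_of_set (chart_dom b))
        {z. z $ b = 0 \<and> chart E b z \<in> LT E - chart E a ` K}"
      unfolding M by (simp add: openin_diff)
  qed
  then show "closedin (LT_top E) (chart E a ` K)"
    unfolding closedin_def topspace_LT_top using sub by simp
qed

lemma homeomorphic_map_chart:
  assumes A: "A \<subseteq> chart_dom a"
  shows "homeomorphic_map (top_of_set A) (subtopology (LT_top E) (chart E a ` A)) (chart E a)"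
proof -
  let ?H = "chart_dom a"
  have im: "chart E a ` ?H \<subseteq> LT E" using chart_in_LT by auto
  have "homeomorphic_map (top_of_set ?H) (subtopology (LT_top E) (chart E a ` ?H)) (chart E a)"
  proof (rule bijective_closed_imp_homeomorphic_map)
    show "continuous_map (top_of_set ?H) (subtopology (LT_top E) (chart E a ` ?H)) (chart E a)"
      using continuous_map_chart[of a] by (auto simp: continuous_map_in_subtopology)
    show "closed_map (top_of_set ?H) (subtopology (LT_top E) (chart E a ` ?H)) (chart E a)"
      using closed_map_chart[of a] by (intro closed_map_into_subtopology) auto
    show "chart E a ` topspace (top_of_set ?H) = topspace (subtopology (LT_top E) (chart E a ` ?H))"
      using im by (auto simp: topspace_LT_top)
    show "inj_on (chart E a) (topspace (top_of_set ?H))"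
      using chart_inj by (auto intro: inj_onI)
  qed
  then have "homeomorphic_map (subtopology (top_of_set ?H) A)
      (subtopology (subtopology (LT_top E) (chart E a ` ?H)) (chart E a ` A)) (chart E a)"
    by (rule homeomorphic_map_subtopologies) (use A im in \<open>auto simp: topspace_LT_top\<close>)
  then show ?thesis
    using A by (simp add: subtopology_subtopology Int_absorb1 image_mono)
qed

lemma closure_of_chart_image:
  assumes A: "A \<subseteq> chart_dom a"
  shows "(LT_top E) closure_of (chart E a ` A) = chart E a ` closure A"
proof
  have "closure A \<subseteq> chart_dom a" using closure_minimal[OF A closed_chart_dom] .
  then have "closedin (top_of_set (chart_dom a)) (closure A)"
    using closedin_closed_eq[OF closed_chart_dom[of a], of "closure A"] by simp
  then have "closedin (LT_top E) (chart E a ` closure A)"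
    using closed_map_chart[of a] unfolding closed_map_def by blast
  then show "(LT_top E) closure_of (chart E a ` A) \<subseteq> chart E a ` closure A"
    using closure_of_minimal closure_subset[of A] by (metis image_mono)
next
  have "top_of_set (chart_dom a) closure_of A = closure A"
    using A closure_minimal[OF A closed_chart_dom] by (simp add: closure_of_subtopology Int_absorb1)
  then show "chart E a ` closure A \<subseteq> (LT_top E) closure_of (chart E a ` A)"
    using continuous_map_image_closure_subset[OF continuous_map_chart[of a], of A] by simp
qed

end

section \<open>Cells cut out by sign conditions on coordinates\<close>

locale sign_pattern =
  fixes Z Pos Neg :: "'v::finite set"
  assumes disjoint: "Z \<inter> Pos = {}" "Z \<inter> Neg = {}" "Pos \<inter> Neg = {}"
begin

definition sign_cell :: "(real^'v) set" where
  "sign_cell = {y. (\<forall>c\<in>Z. y $ c = 0) \<and> (\<forall>c\<in>Pos. 0 < y $ c) \<and> (\<forall>c\<in>Neg. y $ c < 0)}"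

definition closed_sign_cell :: "(real^'v) set" where
  "closed_sign_cell = {y. (\<forall>c\<in>Z. y $ c = 0) \<and> (\<forall>c\<in>Pos. 0 \<le> y $ c) \<and> (\<forall>c\<in>Neg. y $ c \<le> 0)}"

lemma polyhedron_closed_sign_cell: "polyhedron closed_sign_cell"
proof -
  define H where "H c = (if c \<in> Z then {y::real^'v. axis c 1 \<bullet> y = 0}
      else if c \<in> Pos then {y. (- axis c 1) \<bullet> y \<le> 0}
      else if c \<in> Neg then {y. axis c 1 \<bullet> y \<le> 0} else UNIV)" for c
  have "y \<in> H c \<longleftrightarrow>
      (c \<in> Z \<longrightarrow> y $ c = 0) \<and> (c \<in> Pos \<longrightarrow> 0 \<le> y $ c) \<and> (c \<in> Neg \<longrightarrow> y $ c \<le> 0)" for y c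
    unfolding H_def using disjoint by (auto simp: inner_axis')
  then have "closed_sign_cell = \<Inter> (range H)"
    unfolding closed_sign_cell_def by blast
  moreover have "polyhedron (H c)" for c
    unfolding H_def
    by (auto intro: polyhedron_hyperplane polyhedron_halfspace_le polyhedron_halfspace_ge)
  ultimately show ?thesis by (metis finite finite_imageI imageE polyhedron_Inter)
qed

text \<open>Every point of the closed cell is a limit of \<open>y + t \<cdot> s\<close>, t \<rightarrow> 0+, where s is the sign
  vector of the pattern.\<close>
lemma closure_sign_cell: "closure sign_cell = closed_sign_cell"
proof
  show "closure sign_cell \<subseteq> closed_sign_cell"
    using polyhedron_imp_closed[OF polyhedron_closed_sign_cell]
    by (rule closure_minimal[rotated]) (auto simp: sign_cell_def closed_sign_cell_def)
next
  define s :: "real^'v" where "s = (\<chi> c. if c \<in> Pos then 1 else if c \<in> Neg then -1 else 0)"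
  show "closed_sign_cell \<subseteq> closure sign_cell"
  proof
    fix y assume y: "y \<in> closed_sign_cell"
    have "y + t *\<^sub>R s \<in> sign_cell" if "0 < t" for t
      using y that disjoint unfolding sign_cell_def closed_sign_cell_def s_def by auto
    then have "\<forall>\<^sub>F t in at_right 0. y + t *\<^sub>R s \<in> closure sign_cell"
      using eventually_at_right_less closure_subset by (blast intro: eventually_mono)
    moreover have "((\<lambda>t. y + t *\<^sub>R s) \<longlongrightarrow> y + (0::real) *\<^sub>R s) (at_right 0)"
      by (intro tendsto_intros)
    ultimately show "y \<in> closure sign_cell"
      using Lim_in_closed_set[OF closed_closure] by fastforce
  qed
qed

definition log_coord :: "'v \<Rightarrow> real \<Rightarrow> real" where
  "log_coord c t = (if c \<in> Pos then ln t else if c \<in> Neg then ln (- t) else t)"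

definition exp_coord :: "'v \<Rightarrow> real \<Rightarrow> real" where
  "exp_coord c s = (if c \<in> Pos then exp s else if c \<in> Neg then - exp s else s)"

lemma continuous_on_log_coord: "continuous_on sign_cell (\<lambda>y. log_coord c (y $ c))"
proof -
  consider "c \<in> Pos" | "c \<in> Neg" | "c \<notin> Pos" "c \<notin> Neg" by blast
  then show ?thesis
  proof cases
    case 2
    then have "continuous_on sign_cell (\<lambda>y. ln (- (y $ c)))"
      unfolding sign_cell_def by (auto intro!: continuous_intros)
    moreover have "c \<notin> Pos" using 2 disjoint by blast
    ultimately show ?thesis using 2 unfolding log_coord_def by simp
  qed (auto simp: log_coord_def sign_cell_def intro!: continuous_intros)
qed

lemma sign_cell_homeomorphic_subspace: "sign_cell homeomorphic {y::real^'v. \<forall>c\<in>Z. y $ c = 0}"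
proof -
  define f where "f y = (\<chi> c. log_coord c (y $ c))" for y :: "real^'v"
  define g where "g y = (\<chi> c. exp_coord c (y $ c))" for y :: "real^'v"
  have "homeomorphism sign_cell {y. \<forall>c\<in>Z. y $ c = 0} f g"
  proof
    show "continuous_on sign_cell f"
      unfolding f_def by (intro continuous_on_vec_lambda continuous_on_log_coord)
    have "continuous_on UNIV (\<lambda>y::real^'v. exp_coord c (y $ c))" for c
      unfolding exp_coord_def by (cases "c \<in> Pos"; cases "c \<in> Neg") (auto intro!: continuous_intros)
    then show "continuous_on {y. \<forall>c\<in>Z. y $ c = 0} g"
      unfolding g_def by (intro continuous_on_vec_lambda) (auto intro: continuous_on_subset)
    show "f ` sign_cell \<subseteq> {y. \<forall>c\<in>Z. y $ c = 0}" "g ` {y. \<forall>c\<in>Z. y $ c = 0} \<subseteq> sign_cell"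
      using disjoint by (auto simp: f_def g_def log_coord_def exp_coord_def sign_cell_def)
    show "g (f y) = y" if "y \<in> sign_cell" for y
      using that disjoint by (auto simp: vec_eq_iff f_def g_def log_coord_def exp_coord_def sign_cell_def)
    show "f (g y) = y" for y
      using disjoint by (auto simp: vec_eq_iff f_def g_def log_coord_def exp_coord_def)
  qed
  then show ?thesis unfolding homeomorphic_def by blast
qed

lemma sign_cell_homeomorphic_Euclidean_space:
  "top_of_set sign_cell homeomorphic_space Euclidean_space (card (UNIV - Z))"
proof -
  let ?L = "{y::real^'v. \<forall>c. c \<notin> UNIV - Z \<longrightarrow> y $ c = 0}"
  have "vec.subspace ?L" "vec.dim ?L = card (UNIV - Z)"
    by (rule subspace_substandard_cart, rule dim_substandard_cart)
  then have L: "subspace ?L" "dim ?L = card (UNIV - Z)"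
    by (simp_all only: subspace_vec_eq dim_vec_eq)
  have "?L = {y. \<forall>c\<in>Z. y $ c = 0}" by blast
  then have "top_of_set sign_cell homeomorphic_space top_of_set ?L"
    using sign_cell_homeomorphic_subspace by simp
  also have "\<dots> homeomorphic_space Euclidean_space (card (UNIV - Z))"
    using homeomorphic_subspace_Euclidean_space_dim[OF L(1)] L(2) by simp
  finally show ?thesis .
qed

end

context rooted_tree
begin

definition chart_support :: "real^'v \<Rightarrow> 'v set" where
  "chart_support y = {b. \<forall>v\<in>set (tl (tree_path r b)). 0 \<le> y $ v}"

lemma S_of_chart: "y $ r = 0 \<Longrightarrow> S_of (chart E r y) = chart_support y"
  unfolding S_of_def chart_support_def
  using in_chart_chart_iff transportable_iff tree_path_simps(4) by blast

lemma root_in_chart_support: "r \<in> chart_support y"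
  by (simp add: chart_support_def)

lemma in_chart_support_iff:
  "b \<noteq> r \<Longrightarrow> b \<in> chart_support y \<longleftrightarrow> parent b \<in> chart_support y \<and> 0 \<le> y $ b"
  unfolding chart_support_def using tree_path_parent[of b] tree_path_simps(1,2)[of r "parent b"]
  by (cases "tree_path r (parent b)") auto

lemma coord_chart_parent_edge:
  assumes y: "y $ r = 0" and c: "c \<noteq> r" "c \<in> chart_support y"
  shows "coord (chart E r y) (parent c) c = y $ c" "coord (chart E r y) c (parent c) = y $ c"
proof -
  have "parent c \<in> chart_support y" using c in_chart_support_iff by blast
  then have pc: "transportable (tree_path r (parent c)) y" and cc: "transportable (tree_path r c) y"
    using c S_of_chart[OF y] in_chart_chart_iff[OF y] unfolding S_of_def by auto
  have p: "tree_path r c = tree_path r (parent c) @ [c]" using tree_path_parent c by blast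
  have c_notin: "c \<notin> set (tree_path r (parent c))" using tree_path_simps(4)[of r c] p by auto
  show "coord (chart E r y) (parent c) c = y $ c"
    using coord_chart[OF y pc] transport_nth_notin[OF c_notin] by simp
  have "transport (tree_path r c) y = change_chart (parent c) c (transport (tree_path r (parent c)) y)"
    using transport_snoc[of "tree_path r (parent c)" c y] p tree_path_simps(1,3)[of r "parent c"]
    by simp
  then show "coord (chart E r y) c (parent c) = y $ c"
    using coord_chart[OF y cc] transport_nth_notin[OF c_notin] by simp
qed

end

section \<open>The cell of a correspondence\<close>

locale tree_cell = rooted_tree E r for E :: "'v::finite set set" and r :: 'v +
  fixes S :: "'v set" and P :: "'v set set"
  assumes corresp: "(S, P) \<in> corresp E" and root_in_S: "r \<in> S"
begin

lemma S_subtree: "is_subtree UNIV E S"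
  and Union_blocks: "\<Union>P = S"
  and block_subtree: "C \<in> P \<Longrightarrow> is_subtree UNIV E C"
  using corresp unfolding corresp_def by auto

lemma block_eq: "C \<in> P \<Longrightarrow> C' \<in> P \<Longrightarrow> u \<in> C \<Longrightarrow> u \<in> C' \<Longrightarrow> C = C'"
proof -
  have "\<forall>C\<in>P. \<forall>D\<in>P. C \<noteq> D \<longrightarrow> C \<inter> D = {}" using corresp by (simp add: corresp_def)
  then show "C \<in> P \<Longrightarrow> C' \<in> P \<Longrightarrow> u \<in> C \<Longrightarrow> u \<in> C' \<Longrightarrow> C = C'" by blast
qed

lemma block_nonempty: "C \<in> P \<Longrightarrow> C \<noteq> {}"
  using block_subtree unfolding is_subtree_def is_tree_def by blast

lemma parent_in_S: "v \<in> S \<Longrightarrow> v \<noteq> r \<Longrightarrow> parent v \<in> S"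
  using subtree_parent[OF S_subtree root_in_S] .

definition block_of :: "'v \<Rightarrow> 'v set" where
  "block_of u = (THE C. C \<in> P \<and> u \<in> C)"

lemma block_of_eq: "C \<in> P \<Longrightarrow> u \<in> C \<Longrightarrow> block_of u = C"
  unfolding block_of_def by (rule the_equality) (use block_eq in blast)+

lemma block_of: "u \<in> S \<Longrightarrow> block_of u \<in> P \<and> u \<in> block_of u"
  using Union_blocks block_of_eq by blast

lemma image_block_of: "block_of ` S = P"
proof
  show "block_of ` S \<subseteq> P" using block_of by auto
  show "P \<subseteq> block_of ` S"
  proof
    fix C assume C: "C \<in> P"
    then obtain u where "u \<in> C" using block_nonempty by blast
    then show "C \<in> block_of ` S" using C block_of_eq Union_blocks by blast
  qed
qed

definition same_block :: "'v \<Rightarrow> 'v \<Rightarrow> bool" where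
  "same_block u v \<longleftrightarrow> (\<exists>C\<in>P. u \<in> C \<and> v \<in> C)"

definition block_tops :: "'v set" where
  "block_tops = {c. c \<noteq> r \<and> c \<in> S \<and> \<not> same_block (parent c) c}"

definition block_inner :: "'v set" where
  "block_inner = {c. c \<noteq> r \<and> c \<in> S \<and> same_block (parent c) c}"

definition outer_children :: "'v set" where
  "outer_children = {c. c \<noteq> r \<and> c \<notin> S \<and> parent c \<in> S}"

sublocale sign_pattern "insert r block_tops" block_inner outer_children
  by unfold_locales (auto simp: block_tops_def block_inner_def outer_children_def)

lemma sign_cell_subset_chart_dom: "sign_cell \<subseteq> chart_dom r"
  and closed_sign_cell_subset_chart_dom: "closed_sign_cell \<subseteq> chart_dom r"
  by (auto simp: sign_cell_def closed_sign_cell_def)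

lemma edge_in_rel_iff_same_block:
  assumes "sym F"
    and H: "\<forall>c. c \<noteq> r \<and> c \<in> S \<longrightarrow> ((parent c, c) \<in> F \<longleftrightarrow> same_block (parent c) c)"
    and e: "{a, b} \<in> E" "a \<in> S" "b \<in> S"
  shows "(a, b) \<in> F \<longleftrightarrow> same_block a b"
  using edge_parent[OF e(1)]
proof
  assume "b \<noteq> r \<and> parent b = a"
  then show ?thesis using H e by auto
next
  assume "a \<noteq> r \<and> parent a = b"
  then have "(b, a) \<in> F \<longleftrightarrow> same_block b a" using H e by auto
  moreover have "(a, b) \<in> F \<longleftrightarrow> (b, a) \<in> F" using \<open>sym F\<close> by (blast dest: symD)
  moreover have "same_block a b \<longleftrightarrow> same_block b a" unfolding same_block_def by blast
  ultimately show ?thesis by blast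
qed

lemma rtrancl_class_eq_block:
  assumes F: "F \<subseteq> S \<times> S" "sym F" "\<And>a b. (a, b) \<in> F \<Longrightarrow> {a, b} \<in> E"
    and H: "\<forall>c. c \<noteq> r \<and> c \<in> S \<longrightarrow> ((parent c, c) \<in> F \<longleftrightarrow> same_block (parent c) c)"
    and C: "C \<in> P" "u \<in> C"
  shows "(F\<^sup>* \<inter> S \<times> S) `` {u} = C"
proof
  show "(F\<^sup>* \<inter> S \<times> S) `` {u} \<subseteq> C"
  proof
    fix w assume "w \<in> (F\<^sup>* \<inter> S \<times> S) `` {u}"
    then have "(u, w) \<in> F\<^sup>*" by blast
    then show "w \<in> C"
    proof (induction rule: rtrancl_induct)
      case (step w w')
      then have "same_block w w'"
        using edge_in_rel_iff_same_block[OF F(2) H F(3)] F(1) by blast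
      then show ?case using step.IH C(1) block_eq unfolding same_block_def by blast
    qed (use C in simp)
  qed
next
  show "C \<subseteq> (F\<^sup>* \<inter> S \<times> S) `` {u}"
  proof
    fix w assume "w \<in> C"
    then obtain xs where xs: "edge_walk E xs" "xs \<noteq> []" "hd xs = u" "last xs = w" "set xs \<subseteq> C"
      using subtree_walk[OF block_subtree] C by metis
    have CS: "C \<subseteq> S" using C(1) Union_blocks by blast
    have "(u, w) \<in> F\<^sup>*"
      using edge_walk_rtrancl[OF xs(1,2,5), of F] xs(3,4) edge_in_rel_iff_same_block[OF F(2) H] CS C(1)
      unfolding same_block_def by blast
    then show "w \<in> (F\<^sup>* \<inter> S \<times> S) `` {u}" using \<open>w \<in> C\<close> CS C by blast
  qed
qed

lemma quotient_eq_blocks: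
  assumes F: "F \<subseteq> S \<times> S" "sym F" "\<And>a b. (a, b) \<in> F \<Longrightarrow> {a, b} \<in> E"
    and H: "\<forall>c. c \<noteq> r \<and> c \<in> S \<longrightarrow> ((parent c, c) \<in> F \<longleftrightarrow> same_block (parent c) c)"
  shows "S // (F\<^sup>* \<inter> S \<times> S) = P"
proof -
  have "(F\<^sup>* \<inter> S \<times> S) `` {u} = block_of u" if "u \<in> S" for u
    by (rule rtrancl_class_eq_block[OF F H]) (use block_of[OF that] in auto)
  then have "(\<lambda>u. (F\<^sup>* \<inter> S \<times> S) `` {u}) ` S = block_of ` S" by (rule image_cong[OF refl])
  then show ?thesis
    by (simp add: quotient_def UNION_singleton_eq_range image_block_of)
qed

lemma parent_edge_iff_same_block_if_quotient:
  assumes F: "sym F" "\<And>a b. (a, b) \<in> F \<Longrightarrow> {a, b} \<in> E"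
    and Q: "S // (F\<^sup>* \<inter> S \<times> S) = P" and c: "c \<noteq> r" "c \<in> S"
  shows "(parent c, c) \<in> F \<longleftrightarrow> same_block (parent c) c"
proof -
  let ?R = "F\<^sup>* \<inter> S \<times> S"
  have pc: "parent c \<in> S" using parent_in_S c by blast
  show ?thesis
  proof
    assume "(parent c, c) \<in> F"
    then have "c \<in> ?R `` {parent c}" using pc c by (simp add: r_into_rtrancl)
    moreover have "parent c \<in> ?R `` {parent c}" using pc by (intro ImageI) auto
    moreover have "?R `` {parent c} \<in> P" using quotientI[OF pc, of ?R] Q by simp
    ultimately show "same_block (parent c) c"
      unfolding same_block_def by (intro bexI[of _ "?R `` {parent c}"] conjI)
  next
    assume "same_block (parent c) c"
    then obtain C where C: "C \<in> P" "parent c \<in> C" "c \<in> C" unfolding same_block_def by blast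
    then have "C \<in> S // ?R" using Q by simp
    then obtain u where "C = ?R `` {u}" by (rule quotientE)
    then have uc: "(u, parent c) \<in> F\<^sup>*" "(u, c) \<in> F\<^sup>*" using C by auto
    have "(parent c, u) \<in> F\<^sup>*" using symD[OF sym_rtrancl[OF F(1)] uc(1)] .
    then have "(parent c, c) \<in> F\<^sup>*" using uc(2) by (rule rtrancl_trans)
    then have "(parent c, c) \<in> F \<or> (c, parent c) \<in> F"
      using parent_edge_if_rtrancl[OF F(2)] c by blast
    then show "(parent c, c) \<in> F" using symD[OF F(1)] by blast
  qed
qed

lemma quotient_eq_blocks_iff:
  assumes "F \<subseteq> S \<times> S" "sym F" "\<And>a b. (a, b) \<in> F \<Longrightarrow> {a, b} \<in> E"
  shows "S // (F\<^sup>* \<inter> S \<times> S) = P \<longleftrightarrow>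
           (\<forall>c. c \<noteq> r \<and> c \<in> S \<longrightarrow> ((parent c, c) \<in> F \<longleftrightarrow> same_block (parent c) c))"
  using quotient_eq_blocks[OF assms] parent_edge_iff_same_block_if_quotient[OF assms(2,3)] by blast

lemma chart_support_eq_S_iff:
  "chart_support y = S \<longleftrightarrow> (\<forall>c. c \<noteq> r \<and> parent c \<in> S \<longrightarrow> (c \<in> S \<longleftrightarrow> 0 \<le> y $ c))"
proof
  assume "chart_support y = S"
  then show "\<forall>c. c \<noteq> r \<and> parent c \<in> S \<longrightarrow> (c \<in> S \<longleftrightarrow> 0 \<le> y $ c)"
    using in_chart_support_iff by auto
next
  assume H: "\<forall>c. c \<noteq> r \<and> parent c \<in> S \<longrightarrow> (c \<in> S \<longleftrightarrow> 0 \<le> y $ c)"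
  have "b \<in> chart_support y \<longleftrightarrow> b \<in> S" for b
  proof (induction b rule: parent_induct)
    case root then show ?case using root_in_chart_support root_in_S by simp
  next
    case (parent c)
    then show ?case using in_chart_support_iff[of c y] H parent_in_S[of c] by blast
  qed
  then show "chart_support y = S" by blast
qed

definition positive_parent_edges :: "real^'v \<Rightarrow> ('v \<times> 'v) set" where
  "positive_parent_edges y = {(b, c). b \<in> S \<and> c \<in> S \<and>
     ((c \<noteq> r \<and> parent c = b \<and> 0 < y $ c) \<or> (b \<noteq> r \<and> parent b = c \<and> 0 < y $ b))}"

lemma positive_parent_edges:
  "positive_parent_edges y \<subseteq> S \<times> S" "sym (positive_parent_edges y)"
  "(a, b) \<in> positive_parent_edges y \<Longrightarrow> {a, b} \<in> E"
  unfolding positive_parent_edges_def sym_def using parent_edge by (auto simp: insert_commute)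

lemma parent_edge_positive_iff:
  "c \<noteq> r \<Longrightarrow> c \<in> S \<Longrightarrow> (parent c, c) \<in> positive_parent_edges y \<longleftrightarrow> 0 < y $ c"
  unfolding positive_parent_edges_def using parent_in_S parent_parent_neq by auto

lemma contracted_chart_eq:
  assumes y: "y $ r = 0" and supp: "chart_support y = S"
  shows "contracted E (chart E r y) = positive_parent_edges y"
proof -
  have "(b, c) \<in> contracted E (chart E r y) \<longleftrightarrow> (b, c) \<in> positive_parent_edges y" for b c
  proof (cases "{b, c} \<in> E \<and> b \<in> S \<and> c \<in> S")
    case e: True
    have contracted: "(b, c) \<in> contracted E (chart E r y) \<longleftrightarrow>
        coord (chart E r y) b c = coord (chart E r y) c b \<and> 0 < coord (chart E r y) b c"
      using e unfolding contracted_def induced_def S_of_chart[OF y] supp by auto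
    from edge_parent e consider "c \<noteq> r" "parent c = b" | "b \<noteq> r" "parent b = c"
      by blast
    then show ?thesis
    proof cases
      case 1
      then have "\<not> (b \<noteq> r \<and> parent b = c)" using parent_parent_neq by blast
      then show ?thesis
        using 1 e contracted coord_chart_parent_edge[OF y, of c] supp
        unfolding positive_parent_edges_def by auto
    next
      case 2
      then have "\<not> (c \<noteq> r \<and> parent c = b)" using parent_parent_neq by blast
      then show ?thesis
        using 2 e contracted coord_chart_parent_edge[OF y, of b] supp
        unfolding positive_parent_edges_def by auto
    qed
  next
    case False
    then show ?thesis
      using positive_parent_edges unfolding contracted_def induced_def S_of_chart[OF y] supp
      by auto
  qed
  then show ?thesis by (simp add: set_eq_iff split_paired_all)
qed

lemma P_of_chart_eq_iff:
  assumes y: "y $ r = 0" and supp: "chart_support y = S"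
  shows "P_of E (chart E r y) = P \<longleftrightarrow>
           (\<forall>c. c \<noteq> r \<and> c \<in> S \<longrightarrow> (0 < y $ c \<longleftrightarrow> same_block (parent c) c))"
proof -
  let ?F = "positive_parent_edges y"
  have "?F \<union> ?F\<inverse> = ?F" using positive_parent_edges(2) by (auto dest: symD)
  then have "P_of E (chart E r y) = S // (?F\<^sup>* \<inter> S \<times> S)"
    unfolding P_of_def contracted_chart_eq[OF y supp] S_of_chart[OF y] supp by simp
  then show ?thesis
    using quotient_eq_blocks_iff[OF positive_parent_edges] parent_edge_positive_iff by auto
qed

lemma mem_sign_cell_iff:
  "y \<in> sign_cell \<longleftrightarrow> y $ r = 0 \<and>
     (\<forall>c. c \<in> S \<and> c \<noteq> r \<and> \<not> same_block (parent c) c \<longrightarrow> y $ c = 0) \<and>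
     (\<forall>c. c \<in> S \<and> c \<noteq> r \<and> same_block (parent c) c \<longrightarrow> 0 < y $ c) \<and>
     (\<forall>c. c \<notin> S \<and> c \<noteq> r \<and> parent c \<in> S \<longrightarrow> y $ c < 0)"
  by (simp add: sign_cell_def) (auto simp: block_tops_def block_inner_def outer_children_def)

lemma sign_cell_iff:
  "y \<in> sign_cell \<longleftrightarrow> y $ r = 0 \<and>
     (\<forall>c. c \<noteq> r \<and> parent c \<in> S \<longrightarrow> (c \<in> S \<longleftrightarrow> 0 \<le> y $ c)) \<and>
     (\<forall>c. c \<noteq> r \<and> c \<in> S \<longrightarrow> (0 < y $ c \<longleftrightarrow> same_block (parent c) c))"
  (is "_ \<longleftrightarrow> _ \<and> ?supp \<and> ?blocks")
  unfolding mem_sign_cell_iff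
proof (rule conj_cong[OF refl], rule iffI)
  assume "(\<forall>c. c \<in> S \<and> c \<noteq> r \<and> \<not> same_block (parent c) c \<longrightarrow> y $ c = 0) \<and>
    (\<forall>c. c \<in> S \<and> c \<noteq> r \<and> same_block (parent c) c \<longrightarrow> 0 < y $ c) \<and>
    (\<forall>c. c \<notin> S \<and> c \<noteq> r \<and> parent c \<in> S \<longrightarrow> y $ c < 0)"
  then have tops: "c \<in> S \<Longrightarrow> c \<noteq> r \<Longrightarrow> \<not> same_block (parent c) c \<Longrightarrow> y $ c = 0"
    and inner: "c \<in> S \<Longrightarrow> c \<noteq> r \<Longrightarrow> same_block (parent c) c \<Longrightarrow> 0 < y $ c"
    and outer: "c \<notin> S \<Longrightarrow> c \<noteq> r \<Longrightarrow> parent c \<in> S \<Longrightarrow> y $ c < 0" for c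
    by blast+
  have ?supp
  proof (intro allI impI)
    fix c assume "c \<noteq> r \<and> parent c \<in> S"
    then show "c \<in> S \<longleftrightarrow> 0 \<le> y $ c"
      using tops[of c] inner[of c] outer[of c]
      by (cases "c \<in> S"; cases "same_block (parent c) c") auto
  qed
  moreover have ?blocks
  proof (intro allI impI)
    fix c assume "c \<noteq> r \<and> c \<in> S"
    then show "0 < y $ c \<longleftrightarrow> same_block (parent c) c"
      using tops[of c] inner[of c] by (cases "same_block (parent c) c") auto
  qed
  ultimately show "?supp \<and> ?blocks" ..
next
  assume H: "?supp \<and> ?blocks"
  show "(\<forall>c. c \<in> S \<and> c \<noteq> r \<and> \<not> same_block (parent c) c \<longrightarrow> y $ c = 0) \<and>
    (\<forall>c. c \<in> S \<and> c \<noteq> r \<and> same_block (parent c) c \<longrightarrow> 0 < y $ c) \<and>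
    (\<forall>c. c \<notin> S \<and> c \<noteq> r \<and> parent c \<in> S \<longrightarrow> y $ c < 0)"
  proof (intro conjI allI impI)
    fix c assume "c \<in> S \<and> c \<noteq> r \<and> \<not> same_block (parent c) c"
    moreover have "parent c \<in> S" using calculation parent_in_S by blast
    ultimately show "y $ c = 0" using H by force
  next
    fix c assume "c \<in> S \<and> c \<noteq> r \<and> same_block (parent c) c"
    then show "0 < y $ c" using H by blast
  next
    fix c assume "c \<notin> S \<and> c \<noteq> r \<and> parent c \<in> S"
    then show "y $ c < 0" using H by force
  qed
qed

lemma chart_in_cell_iff:
  assumes y: "y $ r = 0"
  shows "chart E r y \<in> LT_cell E S P \<longleftrightarrow> y \<in> sign_cell"
proof -
  have "chart E r y \<in> LT_cell E S P \<longleftrightarrow> chart_support y = S \<and>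
      (\<forall>c. c \<noteq> r \<and> c \<in> S \<longrightarrow> (0 < y $ c \<longleftrightarrow> same_block (parent c) c))"
    unfolding LT_cell_def using chart_in_LT[OF y] S_of_chart[OF y] P_of_chart_eq_iff[OF y] by auto
  then show ?thesis
    unfolding chart_support_eq_S_iff sign_cell_iff using y by simp
qed

lemma LT_cell_eq_chart_image: "LT_cell E S P = chart E r ` sign_cell"
proof
  show "LT_cell E S P \<subseteq> chart E r ` sign_cell"
  proof
    fix x assume x: "x \<in> LT_cell E S P"
    then have "x \<in> LT E" "in_chart r x"
      unfolding LT_cell_def S_of_def using root_in_S by auto
    then obtain y where "y $ r = 0" "x = chart E r y" by (rule LT_in_chart_imp_chart)
    then show "x \<in> chart E r ` sign_cell" using x chart_in_cell_iff by blast
  qed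
  show "chart E r ` sign_cell \<subseteq> LT_cell E S P"
    using chart_in_cell_iff sign_cell_subset_chart_dom by auto
qed

lemma block_of_block_top: "c \<in> block_tops \<Longrightarrow> block_of c \<subseteq> descendants c"
  using subtree_subset_descendants[OF block_subtree] block_of
  unfolding block_tops_def same_block_def by blast

lemma inj_on_block_of_block_tops: "inj_on block_of block_tops"
proof (rule inj_onI)
  fix c c' assume c: "c \<in> block_tops" "c' \<in> block_tops" "block_of c = block_of c'"
  have "c \<in> S" "c' \<in> S" using c unfolding block_tops_def by auto
  then have "c' \<in> descendants c" "c \<in> descendants c'"
    using block_of_block_top c block_of by blast+
  then show "c = c'" by (rule descendants_antisym)
qed

text \<open>Every block other than that of r has a unique vertex closest to r, its top.\<close>
lemma image_block_of_block_tops: "block_of ` block_tops = P - {block_of r}"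
proof
  show "block_of ` block_tops \<subseteq> P - {block_of r}"
  proof
    fix C assume "C \<in> block_of ` block_tops"
    then obtain c where c: "c \<in> block_tops" "C = block_of c" by blast
    then have cS: "c \<in> S" "c \<noteq> r" "\<not> same_block (parent c) c" unfolding block_tops_def by auto
    have "C \<noteq> block_of r"
    proof
      assume "C = block_of r"
      then have "r \<in> C" "c \<in> C" "C \<in> P" using block_of root_in_S cS c(2) by auto
      then have "parent c \<in> C" using subtree_parent[OF block_subtree] cS by blast
      then show False using cS(3) \<open>c \<in> C\<close> \<open>C \<in> P\<close> unfolding same_block_def by blast
    qed
    then show "C \<in> P - {block_of r}" using block_of cS c by auto
  qed
next
  show "P - {block_of r} \<subseteq> block_of ` block_tops"
  proof
    fix C assume C: "C \<in> P - {block_of r}"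
    then obtain u where "u \<in> C" using block_nonempty by blast
    then obtain v where v: "v \<in> C" "\<forall>w\<in>C. length (tree_path r v) \<le> length (tree_path r w)"
      using ex_has_least_nat[of "\<lambda>w. w \<in> C" u "\<lambda>w. length (tree_path r w)"] by blast
    have "v \<in> S" using v(1) C Union_blocks by blast
    have "v \<noteq> r" using v(1) C block_of_eq[of C v] by auto
    have "\<not> same_block (parent v) v"
    proof
      assume "same_block (parent v) v"
      then have "parent v \<in> C" using block_eq C v(1) unfolding same_block_def by blast
      then show False using v(2) depth_parent_less[OF \<open>v \<noteq> r\<close>] by fastforce
    qed
    then have "v \<in> block_tops" unfolding block_tops_def using \<open>v \<in> S\<close> \<open>v \<noteq> r\<close> by blast
    then show "C \<in> block_of ` block_tops" using block_of_eq C v(1) by blast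
  qed
qed

lemma card_insert_root_block_tops: "card (insert r block_tops) = card P"
proof -
  have "card block_tops = card (P - {block_of r})"
    using card_image[OF inj_on_block_of_block_tops] image_block_of_block_tops by simp
  moreover have "block_of r \<in> P" "r \<notin> block_tops"
    using block_of root_in_S unfolding block_tops_def by auto
  ultimately show ?thesis
    by (simp add: card_Diff_singleton) (metis card_Diff1_less card_gt_0_iff Suc_pred empty_iff finite)
qed

end

theorem proposition2p14:
  fixes E :: "'v::finite set set" and S :: "'v set" and P :: "'v set set"
  assumes "is_tree UNIV E"
    and "(S, P) \<in> corresp E"
  shows "(subtopology (LT_top E) (LT_cell E S P)
           homeomorphic_space Euclidean_space (CARD('v) - card P)) \<and>
         (\<exists>\<alpha>\<in>S. \<exists>Q :: (real^'v) set. polyhedron Q \<and> Q \<subseteq> {y. y $ \<alpha> = 0} \<and>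
           homeomorphic_map (top_of_set Q)
             (subtopology (LT_top E) ((LT_top E) closure_of (LT_cell E S P)))
             (chart E \<alpha>))"
proof -
  interpret tree E using assms(1) by unfold_locales
  obtain r where r: "r \<in> S"
    using assms(2) unfolding corresp_def is_subtree_def is_tree_def by auto
  interpret tree_cell E r S P using assms(2) r by unfold_locales
  have "subtopology (LT_top E) (LT_cell E S P) homeomorphic_space top_of_set sign_cell"
    using homeomorphic_map_chart[OF sign_cell_subset_chart_dom] LT_cell_eq_chart_image
    by (metis homeomorphic_map_imp_homeomorphic_space homeomorphic_space_sym)
  also have "\<dots> homeomorphic_space Euclidean_space (CARD('v) - card P)"
    using sign_cell_homeomorphic_Euclidean_space card_insert_root_block_tops
    by (simp add: card_Diff_subset)
  finally have "subtopology (LT_top E) (LT_cell E S P)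
      homeomorphic_space Euclidean_space (CARD('v) - card P)" .
  moreover have "(LT_top E) closure_of (LT_cell E S P) = chart E r ` closed_sign_cell"
    using closure_of_chart_image[OF sign_cell_subset_chart_dom] closure_sign_cell
      LT_cell_eq_chart_image by simp
  ultimately show ?thesis
    using r polyhedron_closed_sign_cell closed_sign_cell_subset_chart_dom
      homeomorphic_map_chart[OF closed_sign_cell_subset_chart_dom] by auto
qed

end
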